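(* Let $\boldsymbol\lambda,\boldsymbol\mu\in\Pi^l_m$ and $\lambda,\mu\in\Pi$ with $\boldsymbol\lambda\leftrightarrow\lambda$, $\boldsymbol\mu\leftrightarrow\mu$, and assume $|\lambda|=|\mu|=r$. Then $(\boldsymbol\lambda,\boldsymbol\mu)$ satisfies (J1) or (J2) if and only if $\#(B(\lambda)\cap B(\mu))=r-2$.
   Context: Fix $n,l,m\ge1$ and $\mathbf s_l=(s_1,\dots,s_l)\in\mathbb Z^l$, $s=s_1+\dots+s_l$. Partitions are identified with Young diagrams; $\Pi$ is the set of partitions, $\Pi^l_m$ the set of $l$-tuples $\boldsymbol\lambda=(\lambda^{(1)},\dots,\lambda^{(l)})$ of partitions of total size $m$. A ribbon is a nonempty connected skew diagram containing no $2\times2$ square. For $\lambda$ with $|\lambda|=r$, $B(\lambda)=\{\lambda_i+s+1-i:1\le i\le r\}$. Each $k\in\mathbb Z$ is uniquely $k=c(k)+n(d(k)-1)+nl\,m(k)$ with $c(k)\in\{1,\dots,n\}$, $d(k)\in\{1,\dots,l\}$; $\phi(k)=c(k)+n\,m(k)$. $\boldsymbol\lambda\leftrightarrow\lambda$ iff $\{(\lambda^{(b)}_i+s_b+1-i,b):i\ge1,b\}=\{(\phi(k),d(k)):k\in\{\lambda_i+s+1-i:i\ge1\}\}$. Conditions: (J1) $\boldsymbol\lambda\neq\boldsymbol\mu$ and there are $d\ne d'$ with $\mu^{(d)}\subset\lambda^{(d)}$, $\lambda^{(d')}\subset\mu^{(d')}$, $\lambda^{(b)}=\mu^{(b)}$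 for $b\notin\{d,d'\}$, and $\lambda^{(d)}/\mu^{(d)}$ and $\mu^{(d')}/\lambda^{(d')}$ are ribbons of the same length. (J2) $\boldsymbol\lambda\ne\boldsymbol\mu$ and there is $d$ with $\lambda^{(b)}=\mu^{(b)}$ for $b\ne d$, and $\lambda^{(d)}/(\lambda^{(d)}\cap\mu^{(d)})$, $\mu^{(d)}/(\lambda^{(d)}\cap\mu^{(d)})$ are ribbons of the same length. *)

theory Defs
  imports Main
begin

text \<open>Partitions are represented 1-based as functions nat => nat:
  lam i is the i-th part (i >= 1), lam 0 = 0 by convention,
  weakly decreasing, finitely many nonzero parts.\<close>

definition is_partition :: "(nat \<Rightarrow> nat) \<Rightarrow> bool" where
  "is_partition lam \<longleftrightarrow> lam 0 = 0 \<and> (\<forall>i\<ge>1. lam (Suc i) \<le> lam i)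
     \<and> finite {i. lam i \<noteq> 0}"

definition psize :: "(nat \<Rightarrow> nat) \<Rightarrow> nat" where
  "psize lam = (\<Sum>i\<in>{i. lam i \<noteq> 0}. lam i)"

definition diagram :: "(nat \<Rightarrow> nat) \<Rightarrow> (nat \<times> nat) set" where
  "diagram lam = {(i, j). 1 \<le> i \<and> 1 \<le> j \<and> j \<le> lam i}"

definition cell_adj :: "nat \<times> nat \<Rightarrow> nat \<times> nat \<Rightarrow> bool" where
  "cell_adj x y \<longleftrightarrow>
     (fst x = fst y \<and> (snd y = Suc (snd x) \<or> snd x = Suc (snd y))) \<or>
     (snd x = snd y \<and> (fst y = Suc (fst x) \<or> fst x = Suc (fst y)))"

definition cells_connected :: "(nat \<times> nat) set \<Rightarrow> bool" where
  "cells_connected S \<longleftrightarrow>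
     (\<forall>x\<in>S. \<forall>y\<in>S. (\<lambda>u v. u \<in> S \<and> v \<in> S \<and> cell_adj u v)\<^sup>*\<^sup>* x y)"

definition no_2x2 :: "(nat \<times> nat) set \<Rightarrow> bool" where
  "no_2x2 S \<longleftrightarrow> \<not> (\<exists>i j. (i, j) \<in> S \<and> (Suc i, j) \<in> S \<and> (i, Suc j) \<in> S
                           \<and> (Suc i, Suc j) \<in> S)"

text \<open>A ribbon: nonempty connected skew diagram with no 2x2 square.
  It is only applied to skew diagrams (differences of Young diagrams).\<close>
definition is_ribbon :: "(nat \<times> nat) set \<Rightarrow> bool" where
  "is_ribbon S \<longleftrightarrow> finite S \<and> S \<noteq> {} \<and> cells_connected S \<and> no_2x2 S"

definition skew :: "(nat \<Rightarrow> nat) \<Rightarrow> (nat \<Rightarrow> nat) \<Rightarrow> (nat \<times> nat) set" where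
  "skew lam mu = diagram lam - diagram mu"

definition pinter :: "(nat \<Rightarrow> nat) \<Rightarrow> (nat \<Rightarrow> nat) \<Rightarrow> (nat \<Rightarrow> nat)" where
  "pinter lam mu = (\<lambda>i. min (lam i) (mu i))"

definition psubset_eq :: "(nat \<Rightarrow> nat) \<Rightarrow> (nat \<Rightarrow> nat) \<Rightarrow> bool" where
  "psubset_eq mu lam \<longleftrightarrow> diagram mu \<subseteq> diagram lam"

definition multipartitions :: "nat \<Rightarrow> nat \<Rightarrow> (nat \<Rightarrow> nat \<Rightarrow> nat) set" where
  "multipartitions l m = {L. (\<forall>b\<in>{1..l}. is_partition (L b)) \<and>
                            (\<Sum>b=1..l. psize (L b)) = m}"

definition mp_eq :: "nat \<Rightarrow> (nat \<Rightarrow> nat \<Rightarrow> nat) \<Rightarrow> (nat \<Rightarrow> nat \<Rightarrow> nat) \<Rightarrow> bool" where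
  "mp_eq l L M \<longleftrightarrow> (\<forall>b\<in>{1..l}. L b = M b)"

definition J1 :: "nat \<Rightarrow> (nat \<Rightarrow> nat \<Rightarrow> nat) \<Rightarrow> (nat \<Rightarrow> nat \<Rightarrow> nat) \<Rightarrow> bool" where
  "J1 l L M \<longleftrightarrow> \<not> mp_eq l L M \<and>
     (\<exists>d\<in>{1..l}. \<exists>d'\<in>{1..l}. d \<noteq> d' \<and>
        psubset_eq (M d) (L d) \<and> psubset_eq (L d') (M d') \<and>
        (\<forall>b\<in>{1..l}. b \<notin> {d, d'} \<longrightarrow> L b = M b) \<and>
        is_ribbon (skew (L d) (M d)) \<and> is_ribbon (skew (M d') (L d')) \<and>
        card (skew (L d) (M d)) = card (skew (M d') (L d')))"

definition J2 :: "nat \<Rightarrow> (nat \<Rightarrow> nat \<Rightarrow> nat) \<Rightarrow> (nat \<Rightarrow> nat \<Rightarrow> nat) \<Rightarrow> bool" where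
  "J2 l L M \<longleftrightarrow> \<not> mp_eq l L M \<and>
     (\<exists>d\<in>{1..l}.
        (\<forall>b\<in>{1..l}. b \<noteq> d \<longrightarrow> L b = M b) \<and>
        is_ribbon (skew (L d) (pinter (L d) (M d))) \<and>
        is_ribbon (skew (M d) (pinter (L d) (M d))) \<and>
        card (skew (L d) (pinter (L d) (M d))) = card (skew (M d) (pinter (L d) (M d))))"

text \<open>k = c(k) + n(d(k)-1) + n l m(k), c in 1..n, d in 1..l.\<close>
definition cdec :: "nat \<Rightarrow> int \<Rightarrow> int" where
  "cdec n k = (k - 1) mod int n + 1"

definition ddec :: "nat \<Rightarrow> nat \<Rightarrow> int \<Rightarrow> nat" where
  "ddec n l k = nat (((k - 1) div int n) mod int l) + 1"

definition mdec :: "nat \<Rightarrow> nat \<Rightarrow> int \<Rightarrow> int" where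
  "mdec n l k = (k - 1) div (int n * int l)"

definition phi :: "nat \<Rightarrow> nat \<Rightarrow> int \<Rightarrow> int" where
  "phi n l k = cdec n k + int n * mdec n l k"

definition beta_set :: "(nat \<Rightarrow> nat) \<Rightarrow> int \<Rightarrow> int set" where
  "beta_set lam s = {int (lam i) + s + 1 - int i | i. i \<ge> 1}"

text \<open>The correspondence boldlambda <-> lambda (with charge s_l, s = sum).\<close>
definition corresp :: "nat \<Rightarrow> nat \<Rightarrow> (nat \<Rightarrow> int) \<Rightarrow> (nat \<Rightarrow> nat \<Rightarrow> nat) \<Rightarrow> (nat \<Rightarrow> nat) \<Rightarrow> bool" where
  "corresp n l sl L lam \<longleftrightarrow>
     {(int (L b i) + sl b + 1 - int i, b) | i b. i \<ge> 1 \<and> b \<in> {1..l}} =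
     {(phi n l k, ddec n l k) | k. k \<in> beta_set lam (\<Sum>b=1..l. sl b)}"

definition Bset :: "(nat \<Rightarrow> nat) \<Rightarrow> int \<Rightarrow> nat \<Rightarrow> int set" where
  "Bset lam s r = {int (lam i) + s + 1 - int i | i. 1 \<le> i \<and> i \<le> r}"

end

theory Submission
  imports Defs
begin

text \<open>Encode a partition \<open>\<lambda>\<close> by its beta numbers \<open>\<lambda>\<^sub>i - i\<close> (\<open>i \<ge> 1\<close>);
  \<open>B(\<lambda>)\<close> is the first \<open>r\<close> of them shifted by \<open>s + 1\<close>, and all later ones are
  \<open>-i\<close> for \<open>i > r\<close>. So \<open>#(B(\<lambda>) \<inter> B(\<mu>)) = r - \<delta>\<close>, where \<open>\<delta>\<close> is the number of
  beta numbers of \<open>\<lambda>\<close> not shared by \<open>\<mu>\<close>.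

  Reading the diagram diagonal by diagonal through \<open>t \<mapsto> #{beta numbers \<ge> t}\<close> shows
  that adding a ribbon is the same as moving one beta number up to a free position. Hence
  \<open>\<delta> = 1\<close> iff one partition is obtained from the other by adding a ribbon, and, for
  partitions of equal size, \<open>\<delta> = 2\<close> iff both are obtained from their intersection by
  adding ribbons of equal length.

  The correspondence with \<open>l\<close>-multipartitions is the abacus map \<open>k \<mapsto> (d(k), \<phi>(k))\<close>,
  a bijection that distributes the beta numbers of \<open>\<lambda>\<close> among the components; so \<open>\<delta>\<close> is
  the sum of the component distances. It equals 2 exactly when one component is at distance
  2 (J2) or two components are at distance 1 (J1), the two ribbons then going in opposite
  directions because the total size is fixed.\<close>

section \<open>Beta numbers\<close>

definition beta_numbers :: "(nat \<Rightarrow> nat) \<Rightarrow> int set" where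
  "beta_numbers lam = {int (lam i) - int i | i. 1 \<le> i}"

definition beta_prefix :: "(nat \<Rightarrow> nat) \<Rightarrow> nat \<Rightarrow> int set" where
  "beta_prefix lam R = {int (lam i) - int i | i. 1 \<le> i \<and> i \<le> R}"

definition beta_count :: "(nat \<Rightarrow> nat) \<Rightarrow> int \<Rightarrow> nat" where
  "beta_count lam t = card {i. 1 \<le> i \<and> t \<le> int (lam i) - int i}"

lemma partition_antimono:
  assumes "is_partition lam" "1 \<le> i" "i \<le> j"
  shows "lam j \<le> lam i"
  using assms(3)
proof (induction j rule: dec_induct)
  case (step k)
  then show ?case
    using assms(1,2) unfolding is_partition_def by (metis le_trans order.trans)
qed simp

lemma partition_eventually_zero:
  assumes "is_partition lam"
  obtains R where "\<forall>i>R. lam i = 0"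
proof -
  have "finite {i. lam i \<noteq> 0}"
    using assms unfolding is_partition_def by simp
  then obtain R where "\<forall>i\<in>{i. lam i \<noteq> 0}. i \<le> R"
    using finite_nat_set_iff_bounded_le by blast
  then show thesis
    using that by (metis mem_Collect_eq not_le)
qed

lemma partition_zero_beyond_size:
  assumes "is_partition lam" "psize lam < i"
  shows "lam i = 0"
proof (rule ccontr)
  assume "lam i \<noteq> 0"
  then have pos: "1 \<le> lam j" if "j \<in> {1..i}" for j
    using partition_antimono[OF assms(1), of j i] that by fastforce
  have "i = (\<Sum>j\<in>{1..i}. 1)"
    by simp
  also have "\<dots> \<le> (\<Sum>j\<in>{1..i}. lam j)"
    using pos by (rule sum_mono)
  also have "\<dots> \<le> psize lam"
    unfolding psize_def using assms(1) pos
    by (intro sum_mono2) (force simp: is_partition_def)+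
  finally show False
    using assms(2) by simp
qed

lemma beta_strict_antimono:
  assumes "is_partition lam" "1 \<le> i" "i < j"
  shows "int (lam j) - int j < int (lam i) - int i"
  using partition_antimono[OF assms(1,2), of j] assms(3) by linarith

lemma inj_on_beta:
  assumes "is_partition lam"
  shows "inj_on (\<lambda>i. int (lam i) - int i) {1..}"
  by (rule inj_onI) (metis atLeast_iff beta_strict_antimono[OF assms] less_irrefl linorder_neqE_nat)

lemma finite_down_closed_eq_atLeastAtMost:
  fixes S :: "nat set"
  assumes "finite S" "S \<subseteq> {1..}" "\<And>i j. i \<in> S \<Longrightarrow> 1 \<le> j \<Longrightarrow> j \<le> i \<Longrightarrow> j \<in> S"
  shows "S = {1..card S}"
proof (cases "S = {}")
  case False
  then have "Max S \<in> S"
    using assms(1) by simp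
  then have "S = {1..Max S}"
    using assms by (auto intro: assms(3))
  then show ?thesis
    by (metis card_atLeastAtMost diff_Suc_1)
qed simp

lemma finite_beta_count_set:
  assumes "is_partition lam"
  shows "finite {i. 1 \<le> i \<and> t \<le> int (lam i) - int i}"
proof -
  obtain R where R: "\<forall>i>R. lam i = 0"
    using partition_eventually_zero[OF assms] by blast
  have "{i. 1 \<le> i \<and> t \<le> int (lam i) - int i} \<subseteq> {..max R (nat (- t))}"
  proof
    fix i assume "i \<in> {i. 1 \<le> i \<and> t \<le> int (lam i) - int i}"
    then show "i \<in> {..max R (nat (- t))}"
      using R by (cases "R < i") auto
  qed
  then show ?thesis
    using finite_subset by blast
qed

lemma le_beta_count_iff:
  assumes "is_partition lam" "1 \<le> i"
  shows "i \<le> beta_count lam t \<longleftrightarrow> t \<le> int (lam i) - int i"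
proof -
  define S where "S = {i. 1 \<le> i \<and> t \<le> int (lam i) - int i}"
  have "S = {1..card S}"
    using finite_beta_count_set[OF assms(1)] partition_antimono[OF assms(1)]
    by (intro finite_down_closed_eq_atLeastAtMost) (fastforce simp: S_def)+
  then show ?thesis
    using assms(2) unfolding beta_count_def S_def[symmetric]
    by (metis (no_types, lifting) S_def atLeastAtMost_iff mem_Collect_eq)
qed

lemma beta_count_eq_card:
  assumes "is_partition lam"
  shows "beta_count lam t = card {x \<in> beta_numbers lam. t \<le> x}"
    and "finite {x \<in> beta_numbers lam. t \<le> x}"
proof -
  let ?I = "{i. 1 \<le> i \<and> t \<le> int (lam i) - int i}"
  have img: "{x \<in> beta_numbers lam. t \<le> x} = (\<lambda>i. int (lam i) - int i) ` ?I"
    unfolding beta_numbers_def by auto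
  have "inj_on (\<lambda>i. int (lam i) - int i) ?I"
    using inj_on_beta[OF assms] by (rule inj_on_subset) auto
  then show "beta_count lam t = card {x \<in> beta_numbers lam. t \<le> x}"
    unfolding img beta_count_def by (simp add: card_image)
  show "finite {x \<in> beta_numbers lam. t \<le> x}"
    unfolding img using finite_beta_count_set[OF assms] by simp
qed

lemma beta_count_eq_succ:
  assumes "is_partition lam"
  shows "beta_count lam t = beta_count lam (t + 1) + of_bool (t \<in> beta_numbers lam)"
proof (cases "t \<in> beta_numbers lam")
  case True
  then have "{x \<in> beta_numbers lam. t \<le> x} = insert t {x \<in> beta_numbers lam. t + 1 \<le> x}"
    by auto
  then show ?thesis
    using True beta_count_eq_card[OF assms] by simp
next
  case False
  then have "{x \<in> beta_numbers lam. t \<le> x} = {x \<in> beta_numbers lam. t + 1 \<le> x}"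
    by (auto simp: order.order_iff_strict)
  then show ?thesis
    using False beta_count_eq_card[OF assms] by simp
qed

lemma beta_count_antimono:
  assumes "is_partition lam" "t \<le> t'"
  shows "beta_count lam t' \<le> beta_count lam t"
  unfolding beta_count_def using assms(2)
  by (intro card_mono finite_beta_count_set[OF assms(1)]) auto

lemma beta_count_le_succ:
  assumes "is_partition lam"
  shows "beta_count lam t \<le> beta_count lam (t + 1) + 1"
  using beta_count_eq_succ[OF assms, of t] by simp

lemma beta_count_lower_bound:
  assumes "is_partition lam"
  shows "- t \<le> int (beta_count lam t)"
proof (cases "1 \<le> - t")
  case True
  then have "nat (- t) \<le> beta_count lam t"
    using le_beta_count_iff[OF assms, of "nat (- t)" t] by simp
  then show ?thesis
    by linarith
qed simp

lemma mem_diagram_iff_beta_count: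
  assumes "is_partition lam"
  shows "(i, j) \<in> diagram lam \<longleftrightarrow> 1 \<le> i \<and> 1 \<le> j \<and> i \<le> beta_count lam (int j - int i)"
  using le_beta_count_iff[OF assms, of i "int j - int i"] unfolding diagram_def by auto

lemma partition_eqI_beta_count:
  assumes "is_partition lam" "is_partition mu" "\<And>t. beta_count lam t = beta_count mu t"
  shows "lam = mu"
proof
  fix i
  show "lam i = mu i"
  proof (cases "i = 0")
    case True
    then show ?thesis
      using assms(1,2) by (simp add: is_partition_def)
  next
    case False
    then have "t \<le> int (lam i) - int i \<longleftrightarrow> t \<le> int (mu i) - int i" for t
      using le_beta_count_iff[OF assms(1)] le_beta_count_iff[OF assms(2)] assms(3) by simp
    from this[of "int (lam i) - int i"] this[of "int (mu i) - int i"] show ?thesis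
      by simp
  qed
qed

lemma partition_eqI_beta_numbers:
  assumes "is_partition lam" "is_partition mu" "beta_numbers lam = beta_numbers mu"
  shows "lam = mu"
  using assms by (simp add: partition_eqI_beta_count beta_count_eq_card)

lemma psubset_eq_iff_beta_count_le:
  assumes "is_partition nu" "is_partition lam"
  shows "psubset_eq nu lam \<longleftrightarrow> (\<forall>t. beta_count nu t \<le> beta_count lam t)"
proof
  assume "\<forall>t. beta_count nu t \<le> beta_count lam t"
  then show "psubset_eq nu lam"
    unfolding psubset_eq_def
    using mem_diagram_iff_beta_count[OF assms(1)] mem_diagram_iff_beta_count[OF assms(2)]
    by (auto intro: order_trans) (meson order_trans)
next
  assume sub: "psubset_eq nu lam"
  have "nu i \<le> lam i" if "1 \<le> i" for i
  proof (cases "nu i = 0")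
    case False
    then have "(i, nu i) \<in> diagram nu"
      using that unfolding diagram_def by simp
    then have "(i, nu i) \<in> diagram lam"
      using sub unfolding psubset_eq_def by blast
    then show ?thesis
      unfolding diagram_def by simp
  qed simp
  then show "\<forall>t. beta_count nu t \<le> beta_count lam t"
    unfolding beta_count_def
    by (fastforce intro: card_mono finite_beta_count_set[OF assms(2)])
qed

lemma psubset_eq_antisym:
  assumes "is_partition lam" "is_partition mu" "psubset_eq lam mu" "psubset_eq mu lam"
  shows "lam = mu"
  using assms by (meson antisym partition_eqI_beta_count psubset_eq_iff_beta_count_le)

lemma is_partition_pinter:
  assumes "is_partition lam" "is_partition mu"
  shows "is_partition (pinter lam mu)"
proof -
  have "{i. min (lam i) (mu i) \<noteq> 0} \<subseteq> {i. lam i \<noteq> 0}"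
    by auto
  then show ?thesis
    using assms unfolding is_partition_def pinter_def
    by (auto intro: min.mono finite_subset)
qed

lemma psubset_eq_pinter: "psubset_eq (pinter lam mu) lam"
  unfolding psubset_eq_def diagram_def pinter_def by auto

lemma beta_count_pinter:
  assumes "is_partition lam" "is_partition mu"
  shows "beta_count (pinter lam mu) t = min (beta_count lam t) (beta_count mu t)"
proof -
  have "i \<le> beta_count (pinter lam mu) t \<longleftrightarrow> i \<le> min (beta_count lam t) (beta_count mu t)"
    if "1 \<le> i" for i
    using le_beta_count_iff[OF is_partition_pinter[OF assms] that]
      le_beta_count_iff[OF assms(1) that] le_beta_count_iff[OF assms(2) that]
    by (auto simp: pinter_def)
  then show ?thesis
    by presburger
qed

lemma diagram_eq_Sigma:
  assumes "is_partition lam"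
  shows "diagram lam = (SIGMA i:{i. lam i \<noteq> 0}. {1..lam i})"
proof (rule set_eqI)
  fix x :: "nat \<times> nat"
  show "x \<in> diagram lam \<longleftrightarrow> x \<in> (SIGMA i:{i. lam i \<noteq> 0}. {1..lam i})"
    using assms unfolding diagram_def is_partition_def by (cases x; cases "fst x = 0") auto
qed

lemma finite_diagram:
  assumes "is_partition lam"
  shows "finite (diagram lam)"
  using assms unfolding diagram_eq_Sigma[OF assms] is_partition_def by simp

lemma card_diagram:
  assumes "is_partition lam"
  shows "card (diagram lam) = psize lam"
  using assms unfolding diagram_eq_Sigma[OF assms] psize_def is_partition_def
  by (simp add: card_SigmaI)

lemma card_skew:
  assumes "is_partition nu" "is_partition lam" "psubset_eq nu lam"
  shows "card (skew lam nu) = psize lam - psize nu"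
  using assms card_Diff_subset[OF finite_diagram[OF assms(1)]]
  unfolding skew_def psubset_eq_def by (simp add: card_diagram)

lemma psubset_eq_psize_eq:
  assumes "is_partition nu" "is_partition lam" "psubset_eq nu lam" "psize lam = psize nu"
  shows "nu = lam"
proof -
  have "skew lam nu = {}"
    using card_skew[OF assms(1-3)] assms(4) finite_diagram[OF assms(2)]
    unfolding skew_def by simp
  then have "psubset_eq lam nu"
    unfolding skew_def psubset_eq_def by simp
  then show ?thesis
    using psubset_eq_antisym assms(1-3) by blast
qed

section \<open>Distance of beta sets\<close>

definition beta_dist :: "(nat \<Rightarrow> nat) \<Rightarrow> (nat \<Rightarrow> nat) \<Rightarrow> nat" where
  "beta_dist lam mu = card (beta_numbers lam - beta_numbers mu)"

lemma beta_numbers_eq_prefix_Un: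
  assumes "\<forall>i>R. lam i = 0"
  shows "beta_numbers lam = beta_prefix lam R \<union> {- int i | i. R < i}"
proof
  show "beta_numbers lam \<subseteq> beta_prefix lam R \<union> {- int i | i. R < i}"
  proof
    fix x assume "x \<in> beta_numbers lam"
    then obtain i where i: "1 \<le> i" "x = int (lam i) - int i"
      unfolding beta_numbers_def by blast
    show "x \<in> beta_prefix lam R \<union> {- int i | i. R < i}"
    proof (cases "i \<le> R")
      case True
      then show ?thesis
        using i unfolding beta_prefix_def by blast
    next
      case False
      then show ?thesis
        using i assms by auto
    qed
  qed
  have "- int i \<in> beta_numbers lam" if "R < i" for i
  proof -
    have "- int i = int (lam i) - int i" "1 \<le> i"
      using assms that by simp_all
    then show ?thesis
      unfolding beta_numbers_def by blast
  qed
  then show "beta_prefix lam R \<union> {- int i | i. R < i} \<subseteq> beta_numbers lam"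
    unfolding beta_prefix_def beta_numbers_def by blast
qed

lemma beta_prefix_disjoint_tail: "beta_prefix lam R \<inter> {- int i | i. R < i} = {}"
  unfolding beta_prefix_def by auto

lemma beta_numbers_diff_eq_prefix_diff:
  assumes "\<forall>i>R. lam i = 0" "\<forall>i>R. mu i = 0"
  shows "beta_numbers lam - beta_numbers mu = beta_prefix lam R - beta_prefix mu R"
  using beta_numbers_eq_prefix_Un[OF assms(1)] beta_numbers_eq_prefix_Un[OF assms(2)]
    beta_prefix_disjoint_tail[of lam R] by auto

lemma beta_prefix_eq_image: "beta_prefix lam R = (\<lambda>i. int (lam i) - int i) ` {1..R}"
  unfolding beta_prefix_def by auto

lemma finite_beta_prefix: "finite (beta_prefix lam R)"
  unfolding beta_prefix_eq_image by simp

lemma card_beta_prefix: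
  assumes "is_partition lam"
  shows "card (beta_prefix lam R) = R"
  unfolding beta_prefix_eq_image
  using inj_on_subset[OF inj_on_beta[OF assms], of "{1..R}"] by (simp add: card_image)

lemma card_beta_prefix_Int_add_beta_dist:
  assumes "is_partition lam" "\<forall>i>R. lam i = 0" "\<forall>i>R. mu i = 0"
  shows "card (beta_prefix lam R \<inter> beta_prefix mu R) + beta_dist lam mu = R"
  using card_Int_Diff[OF finite_beta_prefix, of lam R "beta_prefix mu R"]
    beta_numbers_diff_eq_prefix_diff[OF assms(2,3)] card_beta_prefix[OF assms(1)]
  by (simp add: beta_dist_def)

lemma Bset_eq_image: "Bset lam s r = (\<lambda>x. x + s + 1) ` beta_prefix lam r"
  unfolding Bset_def beta_prefix_def by (auto simp: image_iff)

lemma card_Bset_Int_add_beta_dist: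
  assumes "is_partition lam" "is_partition mu" "psize lam = r" "psize mu = r"
  shows "card (Bset lam s r \<inter> Bset mu s r) + beta_dist lam mu = r"
proof -
  have inj: "inj (\<lambda>x::int. x + s + 1)"
    by (simp add: inj_def)
  have "card (Bset lam s r \<inter> Bset mu s r) = card (beta_prefix lam r \<inter> beta_prefix mu r)"
    unfolding Bset_eq_image image_Int[OF inj, symmetric] by (simp add: card_image inj_on_def)
  moreover have "\<forall>i>r. lam i = 0" "\<forall>i>r. mu i = 0"
    using partition_zero_beyond_size[OF assms(1)] partition_zero_beyond_size[OF assms(2)] assms(3,4)
    by simp_all
  ultimately show ?thesis
    using card_beta_prefix_Int_add_beta_dist[OF assms(1)] by simp
qed

lemma partitions_common_bound:
  assumes "is_partition lam" "is_partition mu"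
  obtains R where "\<forall>i>R. lam i = 0" "\<forall>i>R. mu i = 0"
proof -
  obtain R1 R2 where "\<forall>i>R1. lam i = 0" "\<forall>i>R2. mu i = 0"
    using partition_eventually_zero[OF assms(1)] partition_eventually_zero[OF assms(2)] by metis
  then show thesis
    using that[of "max R1 R2"] by simp
qed

lemma finite_beta_numbers_diff:
  assumes "is_partition lam" "is_partition mu"
  shows "finite (beta_numbers lam - beta_numbers mu)"
proof -
  obtain R where "\<forall>i>R. lam i = 0" "\<forall>i>R. mu i = 0"
    using partitions_common_bound[OF assms] .
  then show ?thesis
    using beta_numbers_diff_eq_prefix_diff by (simp add: finite_beta_prefix)
qed

lemma beta_dist_commute:
  assumes "is_partition lam" "is_partition mu"
  shows "beta_dist mu lam = beta_dist lam mu"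
proof -
  obtain R where R: "\<forall>i>R. lam i = 0" "\<forall>i>R. mu i = 0"
    using partitions_common_bound[OF assms] .
  show ?thesis
    using card_beta_prefix_Int_add_beta_dist[OF assms(1) R]
      card_beta_prefix_Int_add_beta_dist[OF assms(2) R(2,1)]
    by (simp add: Int_commute)
qed

lemma beta_count_diff:
  assumes "is_partition lam" "is_partition mu"
  shows "int (beta_count lam t) - int (beta_count mu t) =
    (\<Sum>x\<in>beta_numbers lam - beta_numbers mu. of_bool (t \<le> x)) -
    (\<Sum>x\<in>beta_numbers mu - beta_numbers lam. of_bool (t \<le> x))"
proof -
  have count_split: "beta_count lam t = card {x \<in> beta_numbers lam \<inter> beta_numbers mu. t \<le> x}
      + (\<Sum>x\<in>beta_numbers lam - beta_numbers mu. of_bool (t \<le> x))"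
    if "is_partition lam" "is_partition mu" for lam mu
  proof -
    have eq: "{x \<in> beta_numbers lam. t \<le> x} =
        {x \<in> beta_numbers lam \<inter> beta_numbers mu. t \<le> x} \<union> {x \<in> beta_numbers lam - beta_numbers mu. t \<le> x}"
      by auto
    have "card {x \<in> beta_numbers lam. t \<le> x} =
        card {x \<in> beta_numbers lam \<inter> beta_numbers mu. t \<le> x} + card {x \<in> beta_numbers lam - beta_numbers mu. t \<le> x}"
      unfolding eq by (rule card_Un_disjoint) (use beta_count_eq_card(2)[OF that(1), of t] eq in auto)
    then show ?thesis
      using finite_beta_numbers_diff[OF that] beta_count_eq_card(1)[OF that(1)]
      by (simp add: Int_def)
  qed
  show ?thesis
    using count_split[OF assms] count_split[OF assms(2,1)] by (simp add: Int_commute)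
qed

section \<open>Ribbons are bead moves\<close>

definition content :: "nat \<times> nat \<Rightarrow> int" where
  "content x = int (snd x) - int (fst x)"

text \<open>The lowest cell of \<open>lam\<close> of content \<open>t\<close>; a junk value when that diagonal of \<open>lam\<close>
  is empty.\<close>

definition diagonal_last_cell :: "(nat \<Rightarrow> nat) \<Rightarrow> int \<Rightarrow> nat \<times> nat" where
  "diagonal_last_cell lam t = (beta_count lam t, nat (int (beta_count lam t) + t))"

lemma mem_skew_iff_beta_count:
  assumes "is_partition nu" "is_partition lam"
  shows "(i, j) \<in> skew lam nu \<longleftrightarrow>
    1 \<le> i \<and> 1 \<le> j \<and> beta_count nu (int j - int i) < i \<and> i \<le> beta_count lam (int j - int i)"
  unfolding skew_def
  using mem_diagram_iff_beta_count[OF assms(1)] mem_diagram_iff_beta_count[OF assms(2)] by auto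

lemma diagonal_last_cell_in_skew:
  assumes "is_partition nu" "is_partition lam" "beta_count nu t < beta_count lam t"
  shows "diagonal_last_cell lam t \<in> skew lam nu" and "content (diagonal_last_cell lam t) = t"
proof -
  have "1 \<le> int (beta_count lam t) + t"
    using beta_count_lower_bound[OF assms(1), of t] assms(3) by linarith
  then show "diagonal_last_cell lam t \<in> skew lam nu" "content (diagonal_last_cell lam t) = t"
    using assms(3) unfolding diagonal_last_cell_def content_def mem_skew_iff_beta_count[OF assms(1,2)]
    by auto
qed

lemma beta_count_content_skew:
  assumes "is_partition nu" "is_partition lam" "x \<in> skew lam nu"
  shows "beta_count nu (content x) < fst x" and "fst x \<le> beta_count lam (content x)"
proof -
  obtain i j where x: "x = (i, j)"
    by fastforce
  show "beta_count nu (content x) < fst x" "fst x \<le> beta_count lam (content x)"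
    using assms(3) unfolding x content_def mem_skew_iff_beta_count[OF assms(1,2)] by simp_all
qed

lemma content_image_skew:
  assumes "is_partition nu" "is_partition lam"
  shows "content ` skew lam nu = {t. beta_count nu t < beta_count lam t}"
proof
  show "{t. beta_count nu t < beta_count lam t} \<subseteq> content ` skew lam nu"
  proof
    fix t assume "t \<in> {t. beta_count nu t < beta_count lam t}"
    then show "t \<in> content ` skew lam nu"
      using diagonal_last_cell_in_skew[OF assms] by (metis image_eqI mem_Collect_eq)
  qed
  show "content ` skew lam nu \<subseteq> {t. beta_count nu t < beta_count lam t}"
  proof
    fix t assume "t \<in> content ` skew lam nu"
    then obtain x where x: "x \<in> skew lam nu" "t = content x"
      by blast
    show "t \<in> {t. beta_count nu t < beta_count lam t}"
      using beta_count_content_skew[OF assms x(1)] unfolding x(2) by simp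
  qed
qed

lemma cells_connected_path:
  fixes f :: "int \<Rightarrow> nat \<times> nat"
  assumes adj: "\<And>t. p < t \<Longrightarrow> t < a \<Longrightarrow> cell_adj (f t) (f (t + 1))"
  shows "cells_connected (f ` {p<..a})"
proof -
  define R where "R = (\<lambda>u v. u \<in> f ` {p<..a} \<and> v \<in> f ` {p<..a} \<and> cell_adj u v)"
  have "symp R"
    unfolding R_def cell_adj_def by (auto intro: sympI)
  have path: "R\<^sup>*\<^sup>* (f (p + 1)) (f t)" if "p + 1 \<le> t" "t \<le> a" for t
    using that
  proof (induction t rule: int_ge_induct)
    case (step t)
    then have "R (f t) (f (t + 1))"
      unfolding R_def using adj[of t] by auto
    with step show ?case
      by simp
  qed simp
  show ?thesis
    unfolding cells_connected_def R_def[symmetric]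
  proof (intro ballI)
    fix x y assume "x \<in> f ` {p<..a}" "y \<in> f ` {p<..a}"
    then have "R\<^sup>*\<^sup>* (f (p + 1)) x" "R\<^sup>*\<^sup>* (f (p + 1)) y"
      using path by auto
    then show "R\<^sup>*\<^sup>* x y"
      using sympD[OF symp_rtranclp[OF \<open>symp R\<close>]] by (meson rtranclp_trans)
  qed
qed

lemma skew_eq_diagonal_last_cells:
  assumes nu: "is_partition nu" and lam: "is_partition lam"
    and bump: "\<And>t. beta_count lam t = beta_count nu t + of_bool (p < t \<and> t \<le> a)"
  shows "skew lam nu = diagonal_last_cell lam ` {p<..a}"
proof
  show "diagonal_last_cell lam ` {p<..a} \<subseteq> skew lam nu"
    using diagonal_last_cell_in_skew(1)[OF nu lam] bump by auto
  show "skew lam nu \<subseteq> diagonal_last_cell lam ` {p<..a}"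
  proof
    fix x assume x: "x \<in> skew lam nu"
    define t where "t = content x"
    have "beta_count nu t < fst x" "fst x \<le> beta_count lam t"
      using beta_count_content_skew[OF nu lam x] unfolding t_def by simp_all
    then have t: "p < t \<and> t \<le> a" and row: "fst x = beta_count lam t"
      using bump[of t] by (cases "p < t \<and> t \<le> a"; simp)+
    have "snd x = nat (int (fst x) + t)"
      unfolding t_def content_def by simp
    then have "x = diagonal_last_cell lam t"
      unfolding diagonal_last_cell_def using row by (simp add: prod_eq_iff)
    then show "x \<in> diagonal_last_cell lam ` {p<..a}"
      using t by simp
  qed
qed

lemma cell_adj_diagonal_last_cell_succ:
  assumes lam: "is_partition lam" and pos: "1 \<le> int (beta_count lam (t + 1)) + t + 1"
  shows "cell_adj (diagonal_last_cell lam t) (diagonal_last_cell lam (t + 1))"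
proof -
  have "beta_count lam (t + 1) \<le> beta_count lam t" "beta_count lam t \<le> beta_count lam (t + 1) + 1"
    using beta_count_antimono[OF lam, of t "t + 1"] beta_count_le_succ[OF lam, of t] by simp_all
  then consider "beta_count lam t = beta_count lam (t + 1)"
    | "beta_count lam t = Suc (beta_count lam (t + 1))"
    by linarith
  then show ?thesis
    using pos unfolding cell_adj_def diagonal_last_cell_def by cases auto
qed

lemma is_ribbon_if_beta_count_bump:
  assumes nu: "is_partition nu" and lam: "is_partition lam" and "p < a"
    and bump: "\<And>t. beta_count lam t = beta_count nu t + of_bool (p < t \<and> t \<le> a)"
  shows "is_ribbon (skew lam nu)"
proof -
  have "cell_adj (diagonal_last_cell lam t) (diagonal_last_cell lam (t + 1))" if "p < t" "t < a" for t
  proof (rule cell_adj_diagonal_last_cell_succ[OF lam])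
    show "1 \<le> int (beta_count lam (t + 1)) + t + 1"
      using bump[of "t + 1"] beta_count_lower_bound[OF nu, of "t + 1"] that by simp
  qed
  then have "cells_connected (skew lam nu)"
    unfolding skew_eq_diagonal_last_cells[OF nu lam bump] by (rule cells_connected_path)
  moreover have "no_2x2 (skew lam nu)"
  proof (rule ccontr)
    assume "\<not> no_2x2 (skew lam nu)"
    then obtain i j where "(i, j) \<in> skew lam nu" "(Suc i, Suc j) \<in> skew lam nu"
      unfolding no_2x2_def by blast
    moreover have "int (Suc j) - int (Suc i) = int j - int i"
      by simp
    ultimately show False
      unfolding mem_skew_iff_beta_count[OF nu lam] using bump[of "int j - int i"]
      by (simp add: of_bool_def split: if_splits)
  qed
  moreover have "finite (skew lam nu)" "skew lam nu \<noteq> {}"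
    unfolding skew_eq_diagonal_last_cells[OF nu lam bump] using \<open>p < a\<close> by auto
  ultimately show ?thesis
    unfolding is_ribbon_def by simp
qed

lemma beta_count_le_Suc_if_no_2x2:
  assumes nu: "is_partition nu" and lam: "is_partition lam" and "no_2x2 (skew lam nu)"
  shows "beta_count lam t \<le> beta_count nu t + 1"
proof (rule ccontr)
  assume "\<not> beta_count lam t \<le> beta_count nu t + 1"
  then have big: "beta_count nu t + 2 \<le> beta_count lam t"
    by simp
  define i where "i = Suc (beta_count nu t)"
  define j where "j = nat (int i + t)"
  have i: "1 \<le> i" "beta_count nu t < i" "Suc i \<le> beta_count lam t"
    using big unfolding i_def by simp_all
  have "1 \<le> int i + t"
    using beta_count_lower_bound[OF nu, of t] unfolding i_def by simp
  then have j: "1 \<le> j" "int j - int i = t" "int j - int (Suc i) = t - 1"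
    "int (Suc j) - int i = t + 1" "int (Suc j) - int (Suc i) = t"
    unfolding j_def by simp_all
  have "beta_count nu (t - 1) \<le> beta_count nu t + 1" "beta_count nu (t + 1) \<le> beta_count nu t"
    "beta_count lam t \<le> beta_count lam (t - 1)" "beta_count lam t \<le> beta_count lam (t + 1) + 1"
    using beta_count_le_succ[OF nu, of "t - 1"] beta_count_antimono[OF nu, of t "t + 1"]
      beta_count_antimono[OF lam, of "t - 1" t] beta_count_le_succ[OF lam, of t]
    by simp_all
  then have "(i, j) \<in> skew lam nu" "(Suc i, j) \<in> skew lam nu"
    "(i, Suc j) \<in> skew lam nu" "(Suc i, Suc j) \<in> skew lam nu"
    unfolding mem_skew_iff_beta_count[OF nu lam] j(2-5) using i j(1) by auto
  then show False
    using assms(3) unfolding no_2x2_def by blast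
qed

lemma content_between_if_cells_connected:
  assumes conn: "cells_connected S" and "x \<in> S" "y \<in> S" "content x < t" "t < content y"
  shows "t \<in> content ` S"
proof (rule ccontr)
  assume t: "t \<notin> content ` S"
  define R where "R = (\<lambda>u v. u \<in> S \<and> v \<in> S \<and> cell_adj u v)"
  have "R\<^sup>*\<^sup>* x y"
    using conn assms(2,3) unfolding cells_connected_def R_def by blast
  then have "content y < t"
  proof (induction rule: rtranclp_induct)
    case (step z w)
    then have "w \<in> S" "content w \<le> content z + 1"
      unfolding R_def cell_adj_def content_def by auto
    moreover have "content w \<noteq> t"
      using t \<open>w \<in> S\<close> by blast
    ultimately show ?case
      using step.IH by linarith
  qed (use assms(4) in simp)
  then show False
    using assms(5) by simp
qed

lemma finite_int_set_eq_atLeastAtMost: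
  fixes S :: "int set"
  assumes "finite S" "S \<noteq> {}"
    and gapless: "\<And>x y t. x \<in> S \<Longrightarrow> y \<in> S \<Longrightarrow> x < t \<Longrightarrow> t < y \<Longrightarrow> t \<in> S"
  shows "S = {Min S..Max S}"
proof
  show "S \<subseteq> {Min S..Max S}"
    using assms(1) by auto
  show "{Min S..Max S} \<subseteq> S"
  proof
    fix t assume "t \<in> {Min S..Max S}"
    then consider "t = Min S" | "t = Max S" | "Min S < t" "t < Max S"
      by fastforce
    then show "t \<in> S"
      using Min_in[OF assms(1,2)] Max_in[OF assms(1,2)] gapless by cases blast+
  qed
qed

lemma beta_count_bump_if_ribbon:
  assumes nu: "is_partition nu" and lam: "is_partition lam"
    and sub: "psubset_eq nu lam" and rib: "is_ribbon (skew lam nu)"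
  obtains p a where "p < a" "\<And>t. beta_count lam t = beta_count nu t + of_bool (p < t \<and> t \<le> a)"
proof -
  define S where "S = {t. beta_count nu t < beta_count lam t}"
  have S: "S = content ` skew lam nu"
    using content_image_skew[OF nu lam] unfolding S_def by simp
  have "finite S" "S \<noteq> {}"
    using rib unfolding S is_ribbon_def by auto
  moreover have "t \<in> S" if "x \<in> S" "y \<in> S" "x < t" "t < y" for x y t
    using that content_between_if_cells_connected[of "skew lam nu"] rib
    unfolding S is_ribbon_def by blast
  ultimately have interval: "S = {Min S..Max S}"
    by (rule finite_int_set_eq_atLeastAtMost)
  have "beta_count lam t = beta_count nu t + of_bool (Min S - 1 < t \<and> t \<le> Max S)" for t
  proof -
    have "beta_count nu t \<le> beta_count lam t" "beta_count lam t \<le> beta_count nu t + 1"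
      using sub psubset_eq_iff_beta_count_le[OF nu lam] beta_count_le_Suc_if_no_2x2[OF nu lam] rib
      unfolding is_ribbon_def by blast+
    moreover have "t \<in> S \<longleftrightarrow> Min S - 1 < t \<and> t \<le> Max S"
      by (subst interval) auto
    ultimately show ?thesis
      unfolding S_def by (cases "Min S - 1 < t \<and> t \<le> Max S") auto
  qed
  moreover have "Min S - 1 < Max S"
    using Min_le[OF \<open>finite S\<close> Max_in[OF \<open>finite S\<close> \<open>S \<noteq> {}\<close>]] by simp
  ultimately show thesis
    using that by blast
qed

lemma ribbon_iff_beta_count_bump:
  assumes "is_partition nu" "is_partition lam"
  shows "psubset_eq nu lam \<and> is_ribbon (skew lam nu) \<longleftrightarrow>
    (\<exists>p a. p < a \<and> (\<forall>t. beta_count lam t = beta_count nu t + of_bool (p < t \<and> t \<le> a)))"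
proof
  assume "psubset_eq nu lam \<and> is_ribbon (skew lam nu)"
  then show "\<exists>p a. p < a \<and> (\<forall>t. beta_count lam t = beta_count nu t + of_bool (p < t \<and> t \<le> a))"
    using beta_count_bump_if_ribbon[OF assms] by metis
next
  assume "\<exists>p a. p < a \<and> (\<forall>t. beta_count lam t = beta_count nu t + of_bool (p < t \<and> t \<le> a))"
  then obtain p a where "p < a" and bump: "\<And>t. beta_count lam t = beta_count nu t + of_bool (p < t \<and> t \<le> a)"
    by blast
  then show "psubset_eq nu lam \<and> is_ribbon (skew lam nu)"
    using is_ribbon_if_beta_count_bump[OF assms] psubset_eq_iff_beta_count_le[OF assms] by simp
qed

lemma beta_count_bump_iff_bead_move:
  assumes nu: "is_partition nu" and lam: "is_partition lam" and "p < a"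
  shows "(\<forall>t. beta_count lam t = beta_count nu t + of_bool (p < t \<and> t \<le> a)) \<longleftrightarrow>
    beta_numbers lam - beta_numbers nu = {a} \<and> beta_numbers nu - beta_numbers lam = {p}"
proof
  assume bump: "\<forall>t. beta_count lam t = beta_count nu t + of_bool (p < t \<and> t \<le> a)"
  have key: "of_bool (x \<in> beta_numbers nu) + of_bool (p < x \<and> x \<le> a)
      = of_bool (p < x + 1 \<and> x + 1 \<le> a) + (of_bool (x \<in> beta_numbers lam) :: nat)" for x
    using beta_count_eq_succ[OF nu, of x] beta_count_eq_succ[OF lam, of x] bump by simp
  have "(x \<in> beta_numbers lam - beta_numbers nu \<longleftrightarrow> x = a) \<and>
      (x \<in> beta_numbers nu - beta_numbers lam \<longleftrightarrow> x = p)" for x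
    using key[of x] \<open>p < a\<close> by (auto simp: of_bool_def split: if_splits)
  then show "beta_numbers lam - beta_numbers nu = {a} \<and> beta_numbers nu - beta_numbers lam = {p}"
    by blast
next
  assume "beta_numbers lam - beta_numbers nu = {a} \<and> beta_numbers nu - beta_numbers lam = {p}"
  then have diff: "int (beta_count lam t) - int (beta_count nu t) = of_bool (t \<le> a) - of_bool (t \<le> p)" for t
    using beta_count_diff[OF lam nu, of t] by simp
  show "\<forall>t. beta_count lam t = beta_count nu t + of_bool (p < t \<and> t \<le> a)"
  proof
    fix t
    show "beta_count lam t = beta_count nu t + of_bool (p < t \<and> t \<le> a)"
      using diff[of t] \<open>p < a\<close> by (cases "t \<le> p"; cases "t \<le> a") auto
  qed
qed

section \<open>Partitions at distance one and two\<close>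

definition adds_ribbon :: "(nat \<Rightarrow> nat) \<Rightarrow> (nat \<Rightarrow> nat) \<Rightarrow> bool" where
  "adds_ribbon nu lam \<longleftrightarrow> psubset_eq nu lam \<and> is_ribbon (skew lam nu)"

definition ribbon_exchange :: "(nat \<Rightarrow> nat) \<Rightarrow> (nat \<Rightarrow> nat) \<Rightarrow> bool" where
  "ribbon_exchange lam mu \<longleftrightarrow>
    is_ribbon (skew lam (pinter lam mu)) \<and> is_ribbon (skew mu (pinter lam mu)) \<and>
    card (skew lam (pinter lam mu)) = card (skew mu (pinter lam mu))"

lemma adds_ribbon_iff_bead_move:
  assumes "is_partition nu" "is_partition lam"
  shows "adds_ribbon nu lam \<longleftrightarrow>
    (\<exists>p a. p < a \<and> beta_numbers lam - beta_numbers nu = {a} \<and> beta_numbers nu - beta_numbers lam = {p})"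
  unfolding adds_ribbon_def ribbon_iff_beta_count_bump[OF assms]
  by (simp add: beta_count_bump_iff_bead_move[OF assms] cong: conj_cong)

lemma psize_less_if_adds_ribbon:
  assumes "is_partition nu" "is_partition lam" "adds_ribbon nu lam"
  shows "psize nu < psize lam"
proof -
  have "card (skew lam nu) > 0"
    using assms(3) unfolding adds_ribbon_def is_ribbon_def by (simp add: card_gt_0_iff)
  then show ?thesis
    using card_skew[OF assms(1,2)] assms(3) unfolding adds_ribbon_def by simp
qed

lemma beta_dist_eq_0_iff:
  assumes "is_partition lam" "is_partition mu"
  shows "beta_dist lam mu = 0 \<longleftrightarrow> lam = mu"
proof
  assume "beta_dist lam mu = 0"
  moreover have "beta_dist mu lam = beta_dist lam mu"
    using beta_dist_commute[OF assms] .
  ultimately have "card (beta_numbers lam - beta_numbers mu) = 0"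
    "card (beta_numbers mu - beta_numbers lam) = 0"
    unfolding beta_dist_def by simp_all
  then have "beta_numbers lam - beta_numbers mu = {}" "beta_numbers mu - beta_numbers lam = {}"
    using card_0_eq[OF finite_beta_numbers_diff[OF assms]]
      card_0_eq[OF finite_beta_numbers_diff[OF assms(2,1)]] by blast+
  then show "lam = mu"
    using partition_eqI_beta_numbers[OF assms] by blast
qed (simp add: beta_dist_def)

lemma beta_dist_eq_1_iff:
  assumes lam: "is_partition lam" and mu: "is_partition mu"
  shows "beta_dist lam mu = 1 \<longleftrightarrow> adds_ribbon mu lam \<or> adds_ribbon lam mu"
proof
  assume "beta_dist lam mu = 1"
  moreover have "beta_dist mu lam = beta_dist lam mu"
    using beta_dist_commute[OF assms] .
  ultimately obtain a c where a: "beta_numbers lam - beta_numbers mu = {a}"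
    and c: "beta_numbers mu - beta_numbers lam = {c}"
    unfolding beta_dist_def by (metis card_1_singletonE)
  then have "a \<noteq> c"
    by blast
  then consider "c < a" | "a < c"
    by linarith
  then show "adds_ribbon mu lam \<or> adds_ribbon lam mu"
  proof cases
    case 1
    then have "adds_ribbon mu lam"
      unfolding adds_ribbon_iff_bead_move[OF mu lam] using a c by auto
    then show ?thesis ..
  next
    case 2
    then have "adds_ribbon lam mu"
      unfolding adds_ribbon_iff_bead_move[OF lam mu] using a c by auto
    then show ?thesis ..
  qed
next
  assume "adds_ribbon mu lam \<or> adds_ribbon lam mu"
  then obtain x where "beta_numbers lam - beta_numbers mu = {x}"
    unfolding adds_ribbon_iff_bead_move[OF mu lam] adds_ribbon_iff_bead_move[OF lam mu] by auto
  then show "beta_dist lam mu = 1"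
    unfolding beta_dist_def by simp
qed

lemma beta_dist_eq_2_if_ribbon_exchange:
  assumes lam: "is_partition lam" and mu: "is_partition mu" and "ribbon_exchange lam mu"
  shows "beta_dist lam mu = 2"
proof -
  define nu where "nu = pinter lam mu"
  have nu: "is_partition nu"
    unfolding nu_def using is_partition_pinter[OF lam mu] .
  have "adds_ribbon nu lam" "adds_ribbon nu mu"
    using assms(3) psubset_eq_pinter[of lam mu] psubset_eq_pinter[of mu lam]
    unfolding adds_ribbon_def ribbon_exchange_def nu_def by (simp_all add: pinter_def min.commute)
  then obtain p a q b where "p < a" "q < b"
    and bump_lam: "\<forall>t. beta_count lam t = beta_count nu t + of_bool (p < t \<and> t \<le> a)"
    and bump_mu: "\<forall>t. beta_count mu t = beta_count nu t + of_bool (q < t \<and> t \<le> b)"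
    unfolding adds_ribbon_def ribbon_iff_beta_count_bump[OF nu lam] ribbon_iff_beta_count_bump[OF nu mu]
    by meson
  have disjoint: "\<not> (p < t \<and> t \<le> a \<and> q < t \<and> t \<le> b)" for t
    using bump_lam bump_mu beta_count_pinter[OF lam mu, of t] unfolding nu_def by auto
  have "p \<noteq> q"
    using disjoint[of "max p q + 1"] \<open>p < a\<close> \<open>q < b\<close> by auto
  have "a \<noteq> b"
    using disjoint[of "min a b"] \<open>p < a\<close> \<open>q < b\<close> by auto
  have "beta_numbers lam - beta_numbers nu = {a}" "beta_numbers nu - beta_numbers lam = {p}"
    "beta_numbers mu - beta_numbers nu = {b}" "beta_numbers nu - beta_numbers mu = {q}"
    using beta_count_bump_iff_bead_move[OF nu lam \<open>p < a\<close>] beta_count_bump_iff_bead_move[OF nu mu \<open>q < b\<close>]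
      bump_lam bump_mu by simp_all
  then have moved: "x \<in> beta_numbers lam \<and> x \<notin> beta_numbers nu \<longleftrightarrow> x = a"
    "x \<in> beta_numbers nu \<and> x \<notin> beta_numbers lam \<longleftrightarrow> x = p"
    "x \<in> beta_numbers mu \<and> x \<notin> beta_numbers nu \<longleftrightarrow> x = b"
    "x \<in> beta_numbers nu \<and> x \<notin> beta_numbers mu \<longleftrightarrow> x = q" for x
    by blast+
  have "x \<in> beta_numbers lam - beta_numbers mu \<longleftrightarrow> x = a \<or> x = q" for x
    using moved[of x] \<open>p \<noteq> q\<close> \<open>a \<noteq> b\<close> by auto
  moreover have "a \<noteq> q"
    using moved(1)[of a] moved(4)[of q] by blast
  ultimately have "beta_numbers lam - beta_numbers mu = {a, q}" "a \<noteq> q"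
    by blast+
  then show ?thesis
    unfolding beta_dist_def by simp
qed

lemma ribbon_exchange_commute: "ribbon_exchange mu lam \<longleftrightarrow> ribbon_exchange lam mu"
  unfolding ribbon_exchange_def pinter_def by (auto simp: min.commute)

lemma ribbon_exchange_if_interleaved:
  assumes lam: "is_partition lam" and mu: "is_partition mu"
    and lam_mu: "beta_numbers lam - beta_numbers mu = {a, b}"
    and mu_lam: "beta_numbers mu - beta_numbers lam = {c, e}"
    and "b < a" "e < c" "c < a" and size: "psize lam = psize mu"
  shows "ribbon_exchange lam mu"
proof -
  have "b \<noteq> e"
    using lam_mu mu_lam by blast
  have diff: "int (beta_count lam t) - int (beta_count mu t) =
      of_bool (t \<le> a) + of_bool (t \<le> b) - of_bool (t \<le> c) - of_bool (t \<le> e)" for t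
    using beta_count_diff[OF lam mu, of t] \<open>b < a\<close> \<open>e < c\<close> unfolding lam_mu mu_lam by simp
  have "b < e" \<comment> \<open>otherwise \<open>mu \<subseteq> lam\<close>, impossible for distinct partitions of equal size\<close>
  proof (rule ccontr)
    assume "\<not> b < e"
    then have "beta_count mu t \<le> beta_count lam t" for t
      using diff[of t] \<open>b \<noteq> e\<close> \<open>b < a\<close> \<open>e < c\<close> \<open>c < a\<close>
      by (auto simp: of_bool_def split: if_splits)
    then have "mu = lam"
      using psubset_eq_psize_eq[OF mu lam] psubset_eq_iff_beta_count_le[OF mu lam] size by simp
    then show False
      using lam_mu by simp
  qed
  define nu where "nu = pinter lam mu"
  have nu: "is_partition nu"
    unfolding nu_def using is_partition_pinter[OF lam mu] .
  have "beta_count lam t = beta_count nu t + of_bool (c < t \<and> t \<le> a)"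
    "beta_count mu t = beta_count nu t + of_bool (b < t \<and> t \<le> e)" for t
    using diff[of t] beta_count_pinter[OF lam mu, of t] \<open>b < e\<close> \<open>e < c\<close> \<open>c < a\<close>
    unfolding nu_def by (auto simp: of_bool_def split: if_splits)
  then have "adds_ribbon nu lam" "adds_ribbon nu mu"
    unfolding adds_ribbon_def ribbon_iff_beta_count_bump[OF nu lam] ribbon_iff_beta_count_bump[OF nu mu]
    using \<open>b < e\<close> \<open>c < a\<close> by blast+
  then show ?thesis
    using card_skew[OF nu lam] card_skew[OF nu mu] size
    unfolding ribbon_exchange_def adds_ribbon_def nu_def by simp
qed

lemma card_eq_2_ordered:
  fixes S :: "'a::linorder set"
  assumes "card S = 2"
  obtains x y where "y < x" "S = {x, y}"
  using assms by (auto simp: card_2_iff neq_iff insert_commute)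

lemma ribbon_exchange_if_beta_dist_eq_2:
  assumes lam: "is_partition lam" and mu: "is_partition mu"
    and "beta_dist lam mu = 2" and size: "psize lam = psize mu"
  shows "ribbon_exchange lam mu"
proof -
  have "beta_dist mu lam = 2"
    using beta_dist_commute[OF lam mu] assms(3) by simp
  obtain a b c e where "b < a" "e < c"
    and lam_mu: "beta_numbers lam - beta_numbers mu = {a, b}"
    and mu_lam: "beta_numbers mu - beta_numbers lam = {c, e}"
    using card_eq_2_ordered[of "beta_numbers lam - beta_numbers mu"]
      card_eq_2_ordered[of "beta_numbers mu - beta_numbers lam"]
      assms(3) \<open>beta_dist mu lam = 2\<close> unfolding beta_dist_def by metis
  then have "a \<noteq> c"
    by blast
  then consider "c < a" | "a < c"
    by linarith
  then show ?thesis
  proof cases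
    case 1
    then show ?thesis
      using ribbon_exchange_if_interleaved[OF lam mu lam_mu mu_lam \<open>b < a\<close> \<open>e < c\<close> _ size] by simp
  next
    case 2
    then show ?thesis
      using ribbon_exchange_if_interleaved[OF mu lam mu_lam lam_mu \<open>e < c\<close> \<open>b < a\<close> _ size[symmetric]]
      by (simp add: ribbon_exchange_commute)
  qed
qed

lemma beta_dist_eq_2_iff:
  assumes "is_partition lam" "is_partition mu" "psize lam = psize mu"
  shows "beta_dist lam mu = 2 \<longleftrightarrow> ribbon_exchange lam mu"
  using assms beta_dist_eq_2_if_ribbon_exchange ribbon_exchange_if_beta_dist_eq_2 by blast

section \<open>The abacus\<close>

lemma abacus_decomposition:
  assumes "1 \<le> n" "1 \<le> l"
  shows "k = cdec n k + int n * (int (ddec n l k) - 1) + int n * int l * mdec n l k"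
proof -
  define u where "u = k - 1"
  have "u = u mod int n + int n * (u div int n)"
    by simp
  also have "u div int n = (u div int n) mod int l + int l * (u div (int n * int l))"
    using assms by (simp add: zdiv_zmult2_eq)
  finally have "k = (u mod int n + 1) + int n * ((u div int n) mod int l) + int n * int l * (u div (int n * int l))"
    unfolding u_def by (simp add: algebra_simps)
  moreover have "int (ddec n l k) - 1 = (u div int n) mod int l"
    using assms unfolding ddec_def u_def by simp
  ultimately show ?thesis
    unfolding cdec_def mdec_def u_def by simp
qed

lemma phi_div_mod:
  assumes "1 \<le> n"
  shows "(phi n l k - 1) mod int n = cdec n k - 1" and "(phi n l k - 1) div int n = mdec n l k"
proof -
  have "phi n l k - 1 = (k - 1) mod int n + int n * mdec n l k"
    unfolding phi_def cdec_def by simp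
  moreover have "0 \<le> (k - 1) mod int n" "(k - 1) mod int n < int n"
    using assms by simp_all
  ultimately show "(phi n l k - 1) mod int n = cdec n k - 1" "(phi n l k - 1) div int n = mdec n l k"
    unfolding cdec_def by simp_all
qed

lemma inj_abacus_position:
  assumes "1 \<le> n" "1 \<le> l"
  shows "inj (\<lambda>k. (ddec n l k, phi n l k))"
proof (rule injI)
  fix k k' assume "(ddec n l k, phi n l k) = (ddec n l k', phi n l k')"
  then have "ddec n l k = ddec n l k'" "cdec n k = cdec n k'" "mdec n l k = mdec n l k'"
    using phi_div_mod[OF assms(1), of l k] phi_div_mod[OF assms(1), of l k'] by simp_all
  then show "k = k'"
    using abacus_decomposition[OF assms, of k] abacus_decomposition[OF assms, of k'] by simp
qed

lemma beta_set_eq_image: "beta_set lam s = (\<lambda>x. x + s + 1) ` beta_numbers lam"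
  unfolding beta_set_def beta_numbers_def by (auto simp: image_iff)

lemma beta_set_diff_eq_image:
  "beta_set lam s - beta_set mu s = (\<lambda>x. x + s + 1) ` (beta_numbers lam - beta_numbers mu)"
  unfolding beta_set_eq_image by (rule image_set_diff[symmetric]) (simp add: inj_def)

lemma card_beta_set_diff: "card (beta_set lam s - beta_set mu s) = beta_dist lam mu"
  unfolding beta_set_diff_eq_image beta_dist_def by (simp add: card_image inj_on_def)

lemma abacus_image_beta_set:
  assumes "corresp n l sl L lam"
  shows "(\<lambda>k. (ddec n l k, phi n l k)) ` beta_set lam (\<Sum>b=1..l. sl b) =
    (SIGMA b:{1..l}. beta_set (L b) (sl b))"
proof -
  have "(b, y) \<in> (\<lambda>k. (ddec n l k, phi n l k)) ` beta_set lam (\<Sum>b=1..l. sl b) \<longleftrightarrow>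
      b \<in> {1..l} \<and> y \<in> beta_set (L b) (sl b)" for y b
  proof -
    have "(b, y) \<in> (\<lambda>k. (ddec n l k, phi n l k)) ` beta_set lam (\<Sum>b=1..l. sl b) \<longleftrightarrow>
        (y, b) \<in> {(int (L b i) + sl b + 1 - int i, b) | i b. i \<ge> 1 \<and> b \<in> {1..l}}"
      using assms unfolding corresp_def by blast
    then show ?thesis
      unfolding beta_set_def by auto
  qed
  then show ?thesis
    by (simp add: set_eq_iff split_paired_All)
qed

lemma beta_dist_eq_sum_abacus:
  assumes "1 \<le> n" "1 \<le> l"
    and "\<And>b. b \<in> {1..l} \<Longrightarrow> is_partition (L b)" "\<And>b. b \<in> {1..l} \<Longrightarrow> is_partition (M b)"
    and "corresp n l sl L lam" "corresp n l sl M mu"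
  shows "beta_dist lam mu = (\<Sum>b=1..l. beta_dist (L b) (M b))"
proof -
  let ?s = "\<Sum>b=1..l. sl b"
  let ?pos = "\<lambda>k. (ddec n l k, phi n l k)"
  have "beta_dist lam mu = card (?pos ` (beta_set lam ?s - beta_set mu ?s))"
    using inj_abacus_position[OF assms(1,2)] by (simp add: card_image inj_on_subset card_beta_set_diff)
  also have "?pos ` (beta_set lam ?s - beta_set mu ?s) =
      (SIGMA b:{1..l}. beta_set (L b) (sl b) - beta_set (M b) (sl b))"
    unfolding image_set_diff[OF inj_abacus_position[OF assms(1,2)]] Sigma_Diff_distrib2
      abacus_image_beta_set[OF assms(5)] abacus_image_beta_set[OF assms(6)] ..
  also have "card \<dots> = (\<Sum>b=1..l. beta_dist (L b) (M b))"
    using finite_beta_numbers_diff[OF assms(3,4)]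
    by (simp add: beta_set_diff_eq_image card_beta_set_diff[unfolded beta_set_diff_eq_image])
  finally show ?thesis .
qed

section \<open>Multipartitions\<close>

lemma sum_nat_eq_2_iff:
  fixes f :: "'a \<Rightarrow> nat"
  assumes "finite S"
  shows "(\<Sum>b\<in>S. f b) = 2 \<longleftrightarrow>
    (\<exists>d\<in>S. f d = 2 \<and> (\<forall>b\<in>S. b \<noteq> d \<longrightarrow> f b = 0)) \<or>
    (\<exists>d\<in>S. \<exists>d'\<in>S. d \<noteq> d' \<and> f d = 1 \<and> f d' = 1 \<and> (\<forall>b\<in>S. b \<notin> {d, d'} \<longrightarrow> f b = 0))"
    (is "_ \<longleftrightarrow> ?single \<or> ?pair")
proof
  assume sum: "(\<Sum>b\<in>S. f b) = 2"
  then obtain d where d: "d \<in> S" "0 < f d"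
    using sum_SucD[of f S 1] by auto
  have "f d + (\<Sum>b\<in>S - {d}. f b) = 2"
    using sum.remove[OF assms d(1), of f] sum by simp
  then consider "f d = 2" "(\<Sum>b\<in>S - {d}. f b) = 0" | "f d = 1" "(\<Sum>b\<in>S - {d}. f b) = 1"
    using d(2) by linarith
  then show "?single \<or> ?pair"
  proof cases
    case 1
    then have "\<forall>b\<in>S. b \<noteq> d \<longrightarrow> f b = 0"
      using assms by simp
    then show ?thesis
      using 1(1) d(1) by blast
  next
    case 2
    then obtain d' where d': "d' \<in> S - {d}" "f d' = 1" "\<forall>b\<in>S - {d}. d' \<noteq> b \<longrightarrow> f b = 0"
      using sum_eq_1_iff[of "S - {d}" f] assms by auto
    then have "\<forall>b\<in>S. b \<notin> {d, d'} \<longrightarrow> f b = 0"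
      by auto
    then show ?thesis
      using 2(1) d(1) d'(1,2) by (intro disjI2 bexI[of _ d] bexI[of _ d']) auto
  qed
next
  assume "?single \<or> ?pair"
  then obtain D where D: "D \<subseteq> S" "\<forall>b\<in>S - D. f b = 0" "(\<Sum>b\<in>D. f b) = 2"
  proof (elim disjE bexE conjE)
    fix d assume "d \<in> S" "f d = 2" "\<forall>b\<in>S. b \<noteq> d \<longrightarrow> f b = 0"
    then show thesis
      using that[of "{d}"] by simp
  next
    fix d d' assume "d \<in> S" "d' \<in> S" "d \<noteq> d'" "f d = 1" "f d' = 1"
      "\<forall>b\<in>S. b \<notin> {d, d'} \<longrightarrow> f b = 0"
    then show thesis
      using that[of "{d, d'}"] by simp
  qed
  then show "(\<Sum>b\<in>S. f b) = 2"
    using sum.mono_neutral_right[OF assms D(1,2)] D(3) by simp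
qed

lemma sum_eq_sum_on_subset:
  fixes f g :: "'a \<Rightarrow> 'b::cancel_comm_monoid_add"
  assumes "finite S" "D \<subseteq> S" "\<forall>b\<in>S - D. f b = g b" "sum f S = sum g S"
  shows "sum f D = sum g D"
proof -
  have "sum f (S - D) = sum g (S - D)"
    using assms(3) by simp
  then show ?thesis
    using assms(4) sum.subset_diff[OF assms(2,1), of f] sum.subset_diff[OF assms(2,1), of g] by simp
qed

lemma is_partition_component:
  assumes "L \<in> multipartitions l m" "b \<in> {1..l}"
  shows "is_partition (L b)"
  using assms unfolding multipartitions_def by blast

lemma psize_sum_eq_on_changed_components:
  assumes "L \<in> multipartitions l m" "M \<in> multipartitions l m" "D \<subseteq> {1..l}"
    and "\<forall>b\<in>{1..l} - D. L b = M b"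
  shows "(\<Sum>b\<in>D. psize (L b)) = (\<Sum>b\<in>D. psize (M b))"
  using assms sum_eq_sum_on_subset[of "{1..l}" D "\<lambda>b. psize (L b)" "\<lambda>b. psize (M b)"]
  unfolding multipartitions_def by simp

lemma J2_iff_beta_dist:
  assumes L: "L \<in> multipartitions l m" and M: "M \<in> multipartitions l m"
  shows "J2 l L M \<longleftrightarrow> (\<exists>d\<in>{1..l}. beta_dist (L d) (M d) = 2 \<and>
    (\<forall>b\<in>{1..l}. b \<noteq> d \<longrightarrow> beta_dist (L b) (M b) = 0))" (is "_ \<longleftrightarrow> ?rhs")
proof
  assume "J2 l L M"
  then obtain d where d: "d \<in> {1..l}" and rest: "\<forall>b\<in>{1..l}. b \<noteq> d \<longrightarrow> L b = M b"
    and "ribbon_exchange (L d) (M d)"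
    unfolding J2_def ribbon_exchange_def by blast
  then have "beta_dist (L d) (M d) = 2"
    using beta_dist_eq_2_if_ribbon_exchange is_partition_component[OF L d] is_partition_component[OF M d]
    by blast
  then show ?rhs
    using d rest by (auto simp: beta_dist_def)
next
  assume ?rhs
  then obtain d where d: "d \<in> {1..l}" "beta_dist (L d) (M d) = 2"
    and "\<forall>b\<in>{1..l}. b \<noteq> d \<longrightarrow> beta_dist (L b) (M b) = 0"
    by blast
  then have rest: "\<forall>b\<in>{1..l}. b \<noteq> d \<longrightarrow> L b = M b"
    using beta_dist_eq_0_iff is_partition_component[OF L] is_partition_component[OF M] by blast
  then have "psize (L d) = psize (M d)"
    using psize_sum_eq_on_changed_components[OF L M, of "{d}"] d(1) by simp
  then have "ribbon_exchange (L d) (M d)"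
    using beta_dist_eq_2_iff is_partition_component[OF L d(1)] is_partition_component[OF M d(1)] d(2)
    by blast
  moreover have "L d \<noteq> M d"
    using d(2) by (auto simp: beta_dist_def)
  then have "\<not> mp_eq l L M"
    using d(1) unfolding mp_eq_def by blast
  ultimately show "J2 l L M"
    unfolding J2_def ribbon_exchange_def using d(1) rest by blast
qed

lemma J1I:
  assumes L: "L \<in> multipartitions l m" and M: "M \<in> multipartitions l m"
    and d: "d \<in> {1..l}" and d': "d' \<in> {1..l}" and "d \<noteq> d'"
    and grow: "adds_ribbon (M d) (L d)" and shrink: "adds_ribbon (L d') (M d')"
    and rest: "\<forall>b\<in>{1..l}. b \<notin> {d, d'} \<longrightarrow> L b = M b"
  shows "J1 l L M"
proof -
  note parts = is_partition_component[OF L d] is_partition_component[OF M d]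
    is_partition_component[OF L d'] is_partition_component[OF M d']
  have "psize (L d) + psize (L d') = psize (M d) + psize (M d')"
    using psize_sum_eq_on_changed_components[OF L M, of "{d, d'}"] d d' \<open>d \<noteq> d'\<close> rest by simp
  moreover have "psize (M d) < psize (L d)" "psize (L d') < psize (M d')"
    using psize_less_if_adds_ribbon parts grow shrink by blast+
  ultimately have "card (skew (L d) (M d)) = card (skew (M d') (L d'))"
    using card_skew parts grow shrink unfolding adds_ribbon_def by simp
  moreover have "L d \<noteq> M d"
    using \<open>psize (M d) < psize (L d)\<close> by auto
  then have "\<not> mp_eq l L M"
    using d unfolding mp_eq_def by blast
  ultimately show ?thesis
    unfolding J1_def using d d' \<open>d \<noteq> d'\<close> grow shrink rest unfolding adds_ribbon_def by blast
qed

lemma J1I_beta_dist: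
  assumes L: "L \<in> multipartitions l m" and M: "M \<in> multipartitions l m"
    and d: "d \<in> {1..l}" "d' \<in> {1..l}" "d \<noteq> d'"
    and one: "beta_dist (L d) (M d) = 1" "beta_dist (L d') (M d') = 1"
    and rest: "\<forall>b\<in>{1..l}. b \<notin> {d, d'} \<longrightarrow> L b = M b"
  shows "J1 l L M"
proof -
  note parts = is_partition_component[OF L d(1)] is_partition_component[OF M d(1)]
    is_partition_component[OF L d(2)] is_partition_component[OF M d(2)]
  have size: "psize (L d) + psize (L d') = psize (M d) + psize (M d')"
    using psize_sum_eq_on_changed_components[OF L M, of "{d, d'}"] d rest by simp
  have "\<not> (adds_ribbon (M d) (L d) \<and> adds_ribbon (M d') (L d'))"
    using psize_less_if_adds_ribbon[OF parts(2,1)] psize_less_if_adds_ribbon[OF parts(4,3)] size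
    by fastforce
  moreover have "\<not> (adds_ribbon (L d) (M d) \<and> adds_ribbon (L d') (M d'))"
    using psize_less_if_adds_ribbon[OF parts(1,2)] psize_less_if_adds_ribbon[OF parts(3,4)] size
    by fastforce
  moreover have "adds_ribbon (M d) (L d) \<or> adds_ribbon (L d) (M d)"
    "adds_ribbon (M d') (L d') \<or> adds_ribbon (L d') (M d')"
    using one beta_dist_eq_1_iff parts by blast+
  ultimately consider "adds_ribbon (M d) (L d)" "adds_ribbon (L d') (M d')"
    | "adds_ribbon (M d') (L d')" "adds_ribbon (L d) (M d)"
    by blast
  then show "J1 l L M"
    using J1I[OF L M d] J1I[OF L M d(2,1) d(3)[symmetric]] rest
    by cases (simp_all add: insert_commute)
qed

lemma J1_iff_beta_dist:
  assumes L: "L \<in> multipartitions l m" and M: "M \<in> multipartitions l m"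
  shows "J1 l L M \<longleftrightarrow> (\<exists>d\<in>{1..l}. \<exists>d'\<in>{1..l}. d \<noteq> d' \<and>
    beta_dist (L d) (M d) = 1 \<and> beta_dist (L d') (M d') = 1 \<and>
    (\<forall>b\<in>{1..l}. b \<notin> {d, d'} \<longrightarrow> beta_dist (L b) (M b) = 0))" (is "_ \<longleftrightarrow> ?rhs")
proof
  assume "J1 l L M"
  then obtain d d' where d: "d \<in> {1..l}" "d' \<in> {1..l}" "d \<noteq> d'"
    and "adds_ribbon (M d) (L d)" "adds_ribbon (L d') (M d')"
    and rest: "\<forall>b\<in>{1..l}. b \<notin> {d, d'} \<longrightarrow> L b = M b"
    unfolding J1_def adds_ribbon_def by blast
  then have "beta_dist (L d) (M d) = 1" "beta_dist (L d') (M d') = 1"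
    using beta_dist_eq_1_iff is_partition_component[OF L] is_partition_component[OF M] by blast+
  moreover have "\<forall>b\<in>{1..l}. b \<notin> {d, d'} \<longrightarrow> beta_dist (L b) (M b) = 0"
    using rest by (simp add: beta_dist_def)
  ultimately show ?rhs
    using d by blast
next
  assume ?rhs
  then obtain d d' where d: "d \<in> {1..l}" "d' \<in> {1..l}" "d \<noteq> d'"
    and one: "beta_dist (L d) (M d) = 1" "beta_dist (L d') (M d') = 1"
    and "\<forall>b\<in>{1..l}. b \<notin> {d, d'} \<longrightarrow> beta_dist (L b) (M b) = 0"
    by blast
  then have "\<forall>b\<in>{1..l}. b \<notin> {d, d'} \<longrightarrow> L b = M b"
    using beta_dist_eq_0_iff is_partition_component[OF L] is_partition_component[OF M] by blast
  then show "J1 l L M"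
    using J1I_beta_dist[OF L M d one] by blast
qed

theorem mainTheorem7:
  fixes n l m r :: nat and sl :: "nat \<Rightarrow> int"
    and L M :: "nat \<Rightarrow> nat \<Rightarrow> nat" and lam mu :: "nat \<Rightarrow> nat"
  assumes "n \<ge> 1" and "l \<ge> 1" and "m \<ge> 1"
    and "L \<in> multipartitions l m" and "M \<in> multipartitions l m"
    and "is_partition lam" and "is_partition mu"
    and "corresp n l sl L lam" and "corresp n l sl M mu"
    and "psize lam = r" and "psize mu = r"
  shows "(J1 l L M \<or> J2 l L M) \<longleftrightarrow>
         int (card (Bset lam (\<Sum>b=1..l. sl b) r \<inter> Bset mu (\<Sum>b=1..l. sl b) r)) = int r - 2"
proof -
  let ?s = "\<Sum>b=1..l. sl b"
  have "card (Bset lam ?s r \<inter> Bset mu ?s r) + beta_dist lam mu = r"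
    using card_Bset_Int_add_beta_dist assms(6,7,10,11) by blast
  moreover have "beta_dist lam mu = (\<Sum>b=1..l. beta_dist (L b) (M b))"
    using beta_dist_eq_sum_abacus[OF assms(1,2) _ _ assms(8,9)]
      is_partition_component[OF assms(4)] is_partition_component[OF assms(5)] by blast
  moreover have "(J1 l L M \<or> J2 l L M) \<longleftrightarrow> (\<Sum>b=1..l. beta_dist (L b) (M b)) = 2"
    unfolding J1_iff_beta_dist[OF assms(4,5)] J2_iff_beta_dist[OF assms(4,5)]
      sum_nat_eq_2_iff[OF finite_atLeastAtMost] by blast
  ultimately show ?thesis
    by linarith
qed

end
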